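(* Let $p_{UV}$ be a joint distribution of a random vector $U\in\mathbb{F}^{2n}$ and a discrete random variable $V$, and let $J$ be the associated rank variable. For $k\in\{0,\dots,n\}$, $r=k/n$, $m=n-k$, define $\epsilon^{conv}(p_{UV},r)=\Pr[J>2^m]$ and $\epsilon^{ach}(p_{UV},r)=\Pr[J>2^m]+\mathbb{E}\big[\mathbf{1}\{J\le 2^m\}(J-1)2^{-m}\big]$. Then $$\epsilon^{conv}(p_{UV},r)\le\epsilon_{guess}(p_{UV},r)\le\epsilon^{ach}(p_{UV},r).$$ Moreover, with $R^{ach}(p_{UV},\epsilon)=\max\{r:\epsilon^{ach}(p_{UV},r)\le\epsilon\}$ and $R^{conv}(p_{UV},\epsilon)=\min\{r:\epsilon^{conv}(p_{UV},r)>\epsilon\}$ (with $r$ ranging over $\{k/n:k=0,\dots,n\}$), $$R^{ach}(p_{UV},\epsilon)\le R_{guess}(p_{UV},\epsilon)<R^{conv}(p_{UV},\epsilon).$$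
   Context: $\mathbb{F}$ is the field with two elements, $e_{N,i}$ the $i$-th standard basis vector of $\mathbb{F}^N$, $R_{2n}=\sum_{i=1}^{2n}e_{2n,i}e_{2n,2n+1-i}^{\top}$, $\mathrm{Sp}_{2n}=\{C\in\mathbb{F}^{2n\times2n}:C^{\top}R_{2n}C=R_{2n}\}$. Given $p_{UV}$, a partition $n=m+k$, a matrix $C\in\mathrm{Sp}_{2n}$ and a decoder $D$ (a map from pairs (side information value, syndrome in $\mathbb{F}^m$) to $\mathbb{F}^{2n}$), the probability of incorrect guess is $\Pr\big[D\big(V,\sum_{i=1}^m e_{m,i}e_{2n,i}^{\top}CU\big)\ne U\big]$ (the syndrome is the first $m$ coordinates of $CU$). For $r=k/n$, $\epsilon_{guess}(p_{UV},r)$ is the lowest probability of incorrect guess over all pairs $(C,D)$ using $m=n-k$ syndrome bits; for $\epsilon>0$, $R_{guess}(p_{UV},\epsilon)$ is the maximum value of $k/n$ such that some pair $(C,D)$ with $m=n-k$ has probability of incorrect guess at most $\epsilon$. Rank variable: for each value $v$ of $V$, list the $2^{2n}$ vectors of $\mathbb{F}^{2n}$ as $\sigma(1,v),\dots,\sigma(2^{2n},v)$ with $p_{UV}(\sigma(1,v),v)\ge p_{UV}(\sigma(2,v),v)\ge\cdots$ (ties broken arbitrarily), and let $J\in[2^{2n}]$ be the random variable such that the event $\{J=j,V=v\}$ equals $\{U=\sigma(j,v),V=v\}$. $\mathbf{1}\{\cdot\}$ is the indicator. *)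

theory Defs
  imports "HOL-Probability.Probability" "HOL-Library.Z2"
begin

text \<open>Vectors of F^N (F = GF(2) = type bit) are functions nat => bit, with coordinates
  indexed 0..N-1 (0-based) and zero outside. Matrices are nat => nat => bit.\<close>

definition vecs :: "nat \<Rightarrow> (nat \<Rightarrow> bit) set" where
  "vecs N = {u. \<forall>i\<ge>N. u i = 0}"

definition mat_vec :: "nat \<Rightarrow> (nat \<Rightarrow> nat \<Rightarrow> bit) \<Rightarrow> (nat \<Rightarrow> bit) \<Rightarrow> (nat \<Rightarrow> bit)" where
  "mat_vec N C u = (\<lambda>i. if i < N then (\<Sum>j<N. C i j * u j) else 0)"

definition Rmat :: "nat \<Rightarrow> nat \<Rightarrow> nat \<Rightarrow> bit" where
  "Rmat n i j = (if i < 2*n \<and> j < 2*n \<and> i + j = 2*n - 1 then 1 else 0)"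

definition Sp :: "nat \<Rightarrow> (nat \<Rightarrow> nat \<Rightarrow> bit) set" where
  "Sp n = {C. (\<forall>i j. (2*n \<le> i \<or> 2*n \<le> j) \<longrightarrow> C i j = 0) \<and>
     (\<forall>i<2*n. \<forall>j<2*n. (\<Sum>a<2*n. \<Sum>b<2*n. C a i * Rmat n a b * C b j) = Rmat n i j)}"

definition syndrome :: "nat \<Rightarrow> nat \<Rightarrow> (nat \<Rightarrow> nat \<Rightarrow> bit) \<Rightarrow> (nat \<Rightarrow> bit) \<Rightarrow> (nat \<Rightarrow> bit)" where
  "syndrome n m C u = (\<lambda>i. if i < m then mat_vec (2*n) C u i else 0)"

definition err_prob :: "((nat \<Rightarrow> bit) \<times> 'v) pmf \<Rightarrow> nat \<Rightarrow> nat \<Rightarrow> (nat \<Rightarrow> nat \<Rightarrow> bit)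
    \<Rightarrow> ('v \<Rightarrow> (nat \<Rightarrow> bit) \<Rightarrow> (nat \<Rightarrow> bit)) \<Rightarrow> real" where
  "err_prob p n m C D = measure_pmf.prob p {(u, v). D v (syndrome n m C u) \<noteq> u}"

definition eps_guess :: "((nat \<Rightarrow> bit) \<times> 'v) pmf \<Rightarrow> nat \<Rightarrow> nat \<Rightarrow> real" where
  "eps_guess p n k = Inf {err_prob p n (n - k) C D | C D. C \<in> Sp n}"

text \<open>R_guess(p, eps): maximum of k/n over achievable k (max of the empty set = -infinity).\<close>
definition R_guess :: "((nat \<Rightarrow> bit) \<times> 'v) pmf \<Rightarrow> nat \<Rightarrow> real \<Rightarrow> ereal" where
  "R_guess p n \<epsilon> = Sup {ereal (real k / real n) | k. k \<le> n \<and>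
      (\<exists>C D. C \<in> Sp n \<and> err_prob p n (n - k) C D \<le> \<epsilon>)}"

definition is_ranking :: "((nat \<Rightarrow> bit) \<times> 'v) pmf \<Rightarrow> nat \<Rightarrow> ('v \<Rightarrow> nat \<Rightarrow> (nat \<Rightarrow> bit)) \<Rightarrow> bool" where
  "is_ranking p n \<sigma> \<longleftrightarrow> (\<forall>v. bij_betw (\<sigma> v) {1..2^(2*n)} (vecs (2*n)) \<and>
      (\<forall>j1 j2. 1 \<le> j1 \<and> j1 \<le> j2 \<and> j2 \<le> 2^(2*n) \<longrightarrow> pmf p (\<sigma> v j2, v) \<le> pmf p (\<sigma> v j1, v)))"

definition rank :: "nat \<Rightarrow> ('v \<Rightarrow> nat \<Rightarrow> (nat \<Rightarrow> bit)) \<Rightarrow> (nat \<Rightarrow> bit) \<times> 'v \<Rightarrow> nat" where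
  "rank n \<sigma> uv = (THE j. j \<in> {1..2^(2*n)} \<and> \<sigma> (snd uv) j = fst uv)"

definition eps_conv :: "((nat \<Rightarrow> bit) \<times> 'v) pmf \<Rightarrow> nat \<Rightarrow> ('v \<Rightarrow> nat \<Rightarrow> (nat \<Rightarrow> bit)) \<Rightarrow> nat \<Rightarrow> real" where
  "eps_conv p n \<sigma> k = measure_pmf.prob p {uv. rank n \<sigma> uv > 2^(n - k)}"

definition eps_ach :: "((nat \<Rightarrow> bit) \<times> 'v) pmf \<Rightarrow> nat \<Rightarrow> ('v \<Rightarrow> nat \<Rightarrow> (nat \<Rightarrow> bit)) \<Rightarrow> nat \<Rightarrow> real" where
  "eps_ach p n \<sigma> k = measure_pmf.prob p {uv. rank n \<sigma> uv > 2^(n - k)} +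
     measure_pmf.expectation p (\<lambda>uv. (if rank n \<sigma> uv \<le> 2^(n - k) then 1 else 0) *
        (real (rank n \<sigma> uv) - 1) / 2^(n - k))"

text \<open>R^ach = max {r : eps_ach \<le> eps} (max of empty = -infinity),
  R^conv = min {r : eps_conv > eps} (min of empty = +infinity); r ranges over {k/n : k \<le> n}.\<close>
definition R_ach :: "((nat \<Rightarrow> bit) \<times> 'v) pmf \<Rightarrow> nat \<Rightarrow> ('v \<Rightarrow> nat \<Rightarrow> (nat \<Rightarrow> bit)) \<Rightarrow> real \<Rightarrow> ereal" where
  "R_ach p n \<sigma> \<epsilon> = Sup {ereal (real k / real n) | k. k \<le> n \<and> eps_ach p n \<sigma> k \<le> \<epsilon>}"

definition R_conv :: "((nat \<Rightarrow> bit) \<times> 'v) pmf \<Rightarrow> nat \<Rightarrow> ('v \<Rightarrow> nat \<Rightarrow> (nat \<Rightarrow> bit)) \<Rightarrow> real \<Rightarrow> ereal" where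
  "R_conv p n \<sigma> \<epsilon> = Inf {ereal (real k / real n) | k. k \<le> n \<and> eps_conv p n \<sigma> k > \<epsilon>}"

end

(*
  Converse: for a fixed value v of V, a decoder is correct on at most 2^m vectors u (at most one
  per syndrome), so its success probability is at most that of the 2^m most likely vectors,
  which is Pr[J <= 2^m].

  Achievability: decode to the vector of least rank with the observed syndrome, and draw C
  uniformly from Sp_2n. The symplectic group acts transitively on nonzero vectors, so for w /= 0
  the vector C w is uniform on the nonzero vectors, and its first m coordinates all vanish with
  probability at most 2^-m. A sample of rank J is decoded wrongly only if one of the J - 1 vectors
  of smaller rank has the same syndrome, which by the union bound has probability at most
  (J - 1) 2^-m. Averaging over C, some C attains eps_ach. The rate bounds follow because eps_conv
  is monotone in k.
*)

theory Submission
  imports Defs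
begin

section \<open>The symplectic group over GF(2)\<close>

declare add_bit_eq_xor[simp del] mult_bit_eq_and[simp del]

lemma UNIV_bit: "(UNIV :: bit set) = {0, 1}"
  by auto

lemma bit_add_eq_0_iff: "(a::bit) + b = 0 \<longleftrightarrow> a = b"
  by (cases a; cases b) auto

definition unit_vec :: "nat \<Rightarrow> nat \<Rightarrow> bit" where
  "unit_vec k = (\<lambda>i. if i = k then 1 else 0)"

definition mats :: "nat \<Rightarrow> (nat \<Rightarrow> nat \<Rightarrow> bit) set" where
  "mats N = {C. \<forall>i j. N \<le> i \<or> N \<le> j \<longrightarrow> C i j = 0}"

definition mat_mul :: "nat \<Rightarrow> (nat \<Rightarrow> nat \<Rightarrow> bit) \<Rightarrow> (nat \<Rightarrow> nat \<Rightarrow> bit) \<Rightarrow> nat \<Rightarrow> nat \<Rightarrow> bit" where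
  "mat_mul N A B = (\<lambda>i j. if i < N \<and> j < N then \<Sum>l<N. A i l * B l j else 0)"

lemma unit_vec_in_vecs: "k < N \<Longrightarrow> unit_vec k \<in> vecs N"
  by (simp add: vecs_def unit_vec_def)

lemma sum_unit_vec:
  assumes "i < N"
  shows "(\<Sum>l<N. unit_vec i l * f l) = (f i :: bit)"
proof -
  have "(\<Sum>l<N. unit_vec i l * f l) = (\<Sum>l<N. if l = i then f l else 0)"
    by (rule sum.cong) (auto simp: unit_vec_def)
  then show ?thesis
    using assms by simp
qed

lemma mat_vec_in_vecs: "mat_vec N C u \<in> vecs N"
  by (simp add: mat_vec_def vecs_def)

lemma mat_vec_add: "mat_vec N C (\<lambda>i. x i + y i) = (\<lambda>i. mat_vec N C x i + mat_vec N C y i)"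
  by (auto simp: mat_vec_def distrib_left sum.distrib)

lemma mat_vec_unit_vec:
  assumes "C \<in> mats N" "j < N"
  shows "mat_vec N C (unit_vec j) = (\<lambda>i. C i j)"
proof -
  have "(\<Sum>l<N. C i l * unit_vec j l) = C i j" for i
    using sum_unit_vec[OF assms(2), of "C i"] by (simp add: mult.commute)
  with assms show ?thesis
    by (auto simp: mat_vec_def mats_def)
qed

lemma mat_vec_mat_mul: "mat_vec N (mat_mul N A B) x = mat_vec N A (mat_vec N B x)"
proof -
  have "(\<Sum>j<N. (\<Sum>l<N. A i l * B l j) * x j) = (\<Sum>l<N. A i l * (\<Sum>j<N. B l j * x j))" for i
  proof -
    have "(\<Sum>j<N. (\<Sum>l<N. A i l * B l j) * x j) = (\<Sum>j<N. \<Sum>l<N. A i l * (B l j * x j))"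
      by (simp add: sum_distrib_right mult.assoc)
    also have "\<dots> = (\<Sum>l<N. \<Sum>j<N. A i l * (B l j * x j))"
      by (rule sum.swap)
    finally show ?thesis
      by (simp add: sum_distrib_left)
  qed
  then show ?thesis
    by (auto simp: mat_vec_def mat_mul_def)
qed

lemma mat_mul_in_mats: "mat_mul N A B \<in> mats N"
  by (simp add: mats_def mat_mul_def)

lemma finite_mats: "finite (mats N)"
proof (rule finite_subset)
  show "mats N \<subseteq> (\<lambda>M i j. if i < N \<and> j < N then M (i, j) else 0) ` ({..<N} \<times> {..<N} \<rightarrow>\<^sub>E UNIV)"
  proof
    fix C assume "C \<in> mats N"
    then show "C \<in> (\<lambda>M i j. if i < N \<and> j < N then M (i, j) else 0) ` ({..<N} \<times> {..<N} \<rightarrow>\<^sub>E UNIV)"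
      by (intro image_eqI[where x="\<lambda>(i, j)\<in>{..<N} \<times> {..<N}. C i j"]) (auto simp: mats_def fun_eq_iff)
  qed
qed (intro finite_imageI finite_PiE; simp add: UNIV_bit)

definition symp_form :: "nat \<Rightarrow> (nat \<Rightarrow> bit) \<Rightarrow> (nat \<Rightarrow> bit) \<Rightarrow> bit" where
  "symp_form N x y = (\<Sum>a<N. x a * y (N - 1 - a))"

lemma sum_Rmat: "(\<Sum>a<2*n. \<Sum>b<2*n. x a * Rmat n a b * y b) = symp_form (2*n) x y"
proof -
  have "(\<Sum>b<2*n. x a * Rmat n a b * y b) = x a * y (2*n - 1 - a)" if "a < 2*n" for a
  proof -
    have "(\<Sum>b<2*n. x a * Rmat n a b * y b) = (\<Sum>b<2*n. if b = 2*n - 1 - a then x a * y b else 0)"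
      by (rule sum.cong) (use that in \<open>auto simp: Rmat_def\<close>)
    then show ?thesis
      using that by simp
  qed
  then show ?thesis
    by (simp add: symp_form_def)
qed

lemma symp_form_eq_sum_Rmat: "symp_form (2*n) x y = (\<Sum>i<2*n. \<Sum>j<2*n. x i * y j * Rmat n i j)"
proof -
  have "(\<Sum>i<2*n. \<Sum>j<2*n. x i * y j * Rmat n i j) = (\<Sum>i<2*n. \<Sum>j<2*n. x i * Rmat n i j * y j)"
    by (intro sum.cong refl) (simp add: mult_ac)
  then show ?thesis
    by (simp add: sum_Rmat)
qed

lemma symp_form_mat_vec:
  "symp_form N (mat_vec N C x) (mat_vec N C y) =
     (\<Sum>i<N. \<Sum>j<N. x i * y j * symp_form N (\<lambda>a. C a i) (\<lambda>b. C b j))"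
proof -
  have "symp_form N (mat_vec N C x) (mat_vec N C y) =
      (\<Sum>a<N. (\<Sum>i<N. C a i * x i) * (\<Sum>j<N. C (N - 1 - a) j * y j))"
    unfolding symp_form_def mat_vec_def by (rule sum.cong) auto
  also have "\<dots> = (\<Sum>a<N. \<Sum>i<N. \<Sum>j<N. x i * y j * (C a i * C (N - 1 - a) j))"
    by (simp add: sum_product mult_ac)
  also have "\<dots> = (\<Sum>i<N. \<Sum>j<N. \<Sum>a<N. x i * y j * (C a i * C (N - 1 - a) j))"
    by (subst sum.swap) (rule sum.cong[OF refl], rule sum.swap)
  also have "\<dots> = (\<Sum>i<N. \<Sum>j<N. x i * y j * symp_form N (\<lambda>a. C a i) (\<lambda>b. C b j))"
    by (simp add: symp_form_def sum_distrib_left)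
  finally show ?thesis .
qed

lemma symp_form_unit_vec_left: "i < N \<Longrightarrow> symp_form N (unit_vec i) y = y (N - 1 - i)"
  unfolding symp_form_def by (rule sum_unit_vec)

lemma symp_form_unit_vec_right:
  assumes k: "k < N"
  shows "symp_form N x (unit_vec (N - Suc k)) = x k"
proof -
  have "symp_form N x (unit_vec (N - Suc k)) = (\<Sum>a<N. if a = k then x a else 0)"
    unfolding symp_form_def by (rule sum.cong) (use k in \<open>auto simp: unit_vec_def\<close>)
  then show ?thesis
    using k by simp
qed

lemma Sp_iff_preserves_symp_form:
  "C \<in> Sp n \<longleftrightarrow> C \<in> mats (2*n) \<and> (\<forall>x\<in>vecs (2*n). \<forall>y\<in>vecs (2*n).
      symp_form (2*n) (mat_vec (2*n) C x) (mat_vec (2*n) C y) = symp_form (2*n) x y)"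
proof -
  have Sp_eq: "C \<in> Sp n \<longleftrightarrow> C \<in> mats (2*n) \<and>
      (\<forall>i<2*n. \<forall>j<2*n. symp_form (2*n) (\<lambda>a. C a i) (\<lambda>b. C b j) = Rmat n i j)"
    by (simp add: Sp_def mats_def sum_Rmat)
  have unit_vec_Rmat: "symp_form (2*n) (unit_vec i) (unit_vec j) = Rmat n i j"
    if "i < 2*n" "j < 2*n" for i j
    using that by (simp add: symp_form_unit_vec_left) (auto simp: unit_vec_def Rmat_def)
  show ?thesis
  proof
    assume "C \<in> Sp n"
    then show "C \<in> mats (2*n) \<and> (\<forall>x\<in>vecs (2*n). \<forall>y\<in>vecs (2*n).
        symp_form (2*n) (mat_vec (2*n) C x) (mat_vec (2*n) C y) = symp_form (2*n) x y)"
      by (simp add: Sp_eq symp_form_mat_vec symp_form_eq_sum_Rmat)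
  next
    assume C: "C \<in> mats (2*n) \<and> (\<forall>x\<in>vecs (2*n). \<forall>y\<in>vecs (2*n).
        symp_form (2*n) (mat_vec (2*n) C x) (mat_vec (2*n) C y) = symp_form (2*n) x y)"
    have "symp_form (2*n) (\<lambda>a. C a i) (\<lambda>b. C b j) = Rmat n i j" if "i < 2*n" "j < 2*n" for i j
    proof -
      have "symp_form (2*n) (mat_vec (2*n) C (unit_vec i)) (mat_vec (2*n) C (unit_vec j))
          = symp_form (2*n) (unit_vec i) (unit_vec j)"
        using C that unit_vec_in_vecs by blast
      then show ?thesis
        using C that by (simp add: mat_vec_unit_vec unit_vec_Rmat)
    qed
    with C show "C \<in> Sp n"
      by (simp add: Sp_eq)
  qed
qed

lemma symp_form_commute: "symp_form N x y = symp_form N y x"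
proof -
  have "symp_form N y x = (\<Sum>i<N. y (N - Suc i) * x (N - 1 - (N - Suc i)))"
    unfolding symp_form_def by (rule sum.nat_diff_reindex[symmetric])
  also have "\<dots> = symp_form N x y"
    unfolding symp_form_def by (rule sum.cong) (auto simp: mult.commute)
  finally show ?thesis
    by simp
qed

lemma symp_form_self: "symp_form (2*n) v v = 0"
proof -
  define g where "g a = v a * v (2*n - 1 - a)" for a
  have "symp_form (2*n) v v = sum g {0..<n} + sum g {n..<2*n}"
    unfolding symp_form_def g_def by (subst sum.atLeastLessThan_concat) (auto simp: atLeast0LessThan)
  also have "sum g {n..<2*n} = sum (\<lambda>i. g (2*n - 1 - i)) {0..<n}"
    by (rule sum.reindex_bij_witness[where i="\<lambda>a. 2*n - 1 - a" and j="\<lambda>a. 2*n - 1 - a"]) auto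
  also have "\<dots> = sum g {0..<n}"
    by (rule sum.cong) (auto simp: g_def mult.commute)
  finally show ?thesis
    by simp
qed

lemma symp_form_add_right: "symp_form N x (\<lambda>i. y i + z i) = symp_form N x y + symp_form N x z"
  by (simp add: symp_form_def distrib_left sum.distrib)

definition transvection :: "nat \<Rightarrow> (nat \<Rightarrow> bit) \<Rightarrow> nat \<Rightarrow> nat \<Rightarrow> bit" where
  "transvection N v = (\<lambda>i j. if i < N \<and> j < N then unit_vec j i + v i * v (N - 1 - j) else 0)"

lemma mat_vec_transvection:
  assumes "x \<in> vecs N" "v \<in> vecs N"
  shows "mat_vec N (transvection N v) x = (\<lambda>i. x i + symp_form N x v * v i)"
proof
  fix i
  show "mat_vec N (transvection N v) x i = x i + symp_form N x v * v i"
  proof (cases "i < N")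
    case True
    have "mat_vec N (transvection N v) x i = (\<Sum>j<N. (if j = i then x j else 0) + v i * (x j * v (N - 1 - j)))"
      unfolding mat_vec_def transvection_def using True
      by (auto intro!: sum.cong simp: algebra_simps unit_vec_def)
    also have "\<dots> = x i + symp_form N x v * v i"
      using True by (simp add: sum.distrib symp_form_def sum_distrib_left mult.commute)
    finally show ?thesis .
  next
    case False
    then show ?thesis
      using assms by (simp add: mat_vec_def vecs_def)
  qed
qed

lemma symp_form_add_multiple:
  "symp_form N (\<lambda>i. x i + c * v i) (\<lambda>i. y i + d * v i)
     = symp_form N x y + d * symp_form N x v + c * symp_form N v y + c * d * symp_form N v v"
  by (simp add: symp_form_def algebra_simps sum.distrib sum_distrib_left)

text \<open>A transvection preserves the form because the form is alternating: the cross terms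
  \<open>\<omega>(x,v) \<omega>(v,y) + \<omega>(y,v) \<omega>(x,v)\<close> cancel in characteristic 2 and \<open>\<omega>(v,v) = 0\<close>.\<close>
lemma transvection_in_Sp:
  assumes v: "v \<in> vecs (2*n)"
  shows "transvection (2*n) v \<in> Sp n"
proof -
  have "symp_form (2*n) (mat_vec (2*n) (transvection (2*n) v) x) (mat_vec (2*n) (transvection (2*n) v) y)
      = symp_form (2*n) x y"
    if "x \<in> vecs (2*n)" "y \<in> vecs (2*n)" for x y
  proof -
    let ?\<omega> = "symp_form (2*n)"
    have "?\<omega> (\<lambda>i. x i + ?\<omega> x v * v i) (\<lambda>i. y i + ?\<omega> y v * v i)
        = ?\<omega> x y + ?\<omega> y v * ?\<omega> x v + ?\<omega> x v * ?\<omega> v y + ?\<omega> x v * ?\<omega> y v * ?\<omega> v v"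
      by (rule symp_form_add_multiple)
    also have "\<dots> = ?\<omega> x y"
      by (cases "?\<omega> x v"; cases "?\<omega> y v") (simp_all add: symp_form_self symp_form_commute[of _ v y])
    finally show ?thesis
      using that v by (simp add: mat_vec_transvection)
  qed
  moreover have "transvection (2*n) v \<in> mats (2*n)"
    by (simp add: mats_def transvection_def)
  ultimately show ?thesis
    by (simp add: Sp_iff_preserves_symp_form)
qed

lemma Sp_nonempty: "Sp n \<noteq> {}"
  using transvection_in_Sp[of "\<lambda>_. 0" n] by (auto simp: vecs_def)

lemma finite_Sp: "finite (Sp n)"
  by (rule finite_subset[OF _ finite_mats]) (auto simp: Sp_iff_preserves_symp_form)

lemma mat_mul_in_Sp:
  assumes "A \<in> Sp n" "B \<in> Sp n"
  shows "mat_mul (2*n) A B \<in> Sp n"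
proof -
  have "symp_form (2*n) (mat_vec (2*n) A (mat_vec (2*n) B x)) (mat_vec (2*n) A (mat_vec (2*n) B y))
      = symp_form (2*n) x y"
    if "x \<in> vecs (2*n)" "y \<in> vecs (2*n)" for x y
    using assms that mat_vec_in_vecs unfolding Sp_iff_preserves_symp_form by metis
  then show ?thesis
    by (simp add: Sp_iff_preserves_symp_form mat_mul_in_mats mat_vec_mat_mul)
qed

lemma Sp_mat_vec_eq_zero:
  assumes C: "C \<in> Sp n" and x: "x \<in> vecs (2*n)" and Cx: "mat_vec (2*n) C x = (\<lambda>_. 0)"
  shows "x = (\<lambda>_. 0)"
proof
  fix k
  show "x k = 0"
  proof (cases "k < 2*n")
    case True
    then have "unit_vec (2*n - Suc k) \<in> vecs (2*n)"
      by (intro unit_vec_in_vecs) arith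
    then have "symp_form (2*n) (mat_vec (2*n) C x) (mat_vec (2*n) C (unit_vec (2*n - Suc k)))
        = symp_form (2*n) x (unit_vec (2*n - Suc k))"
      using C x by (simp add: Sp_iff_preserves_symp_form)
    also have "\<dots> = x k"
      using True by (rule symp_form_unit_vec_right)
    finally show ?thesis
      using Cx by (simp add: symp_form_def)
  next
    case False
    then show ?thesis
      using x by (simp add: vecs_def)
  qed
qed

lemma inj_on_mat_vec_Sp:
  assumes C: "C \<in> Sp n"
  shows "inj_on (mat_vec (2*n) C) (vecs (2*n))"
proof
  fix x y
  assume x: "x \<in> vecs (2*n)" and y: "y \<in> vecs (2*n)" and eq: "mat_vec (2*n) C x = mat_vec (2*n) C y"
  have "mat_vec (2*n) C (\<lambda>i. x i + y i) = (\<lambda>_. 0)"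
    by (simp add: mat_vec_add eq)
  moreover have "(\<lambda>i. x i + y i) \<in> vecs (2*n)"
    using x y by (simp add: vecs_def)
  ultimately have "(\<lambda>i. x i + y i) = (\<lambda>_. 0)"
    using Sp_mat_vec_eq_zero[OF C] by blast
  then show "x = y"
    by (simp add: fun_eq_iff bit_add_eq_0_iff)
qed

lemma inj_on_mat_mul_Sp:
  assumes A: "A \<in> Sp n"
  shows "inj_on (mat_mul (2*n) A) (mats (2*n))"
proof
  fix B B'
  assume B: "B \<in> mats (2*n)" and B': "B' \<in> mats (2*n)" and eq: "mat_mul (2*n) A B = mat_mul (2*n) A B'"
  show "B = B'"
  proof (intro ext)
    fix i j
    show "B i j = B' i j"
    proof (cases "j < 2*n")
      case True
      have "mat_vec (2*n) A (mat_vec (2*n) B (unit_vec j)) = mat_vec (2*n) A (mat_vec (2*n) B' (unit_vec j))"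
        by (metis eq mat_vec_mat_mul)
      then have "mat_vec (2*n) B (unit_vec j) = mat_vec (2*n) B' (unit_vec j)"
        using inj_on_mat_vec_Sp[OF A] mat_vec_in_vecs by (blast dest: inj_onD)
      then show ?thesis
        using True B B' by (simp add: mat_vec_unit_vec fun_eq_iff)
    next
      case False
      then show ?thesis
        using B B' by (simp add: mats_def)
    qed
  qed
qed

lemma exists_symp_form_eq_1:
  assumes x: "x \<in> vecs N" "x \<noteq> (\<lambda>_. 0)" and y: "y \<in> vecs N" "y \<noteq> (\<lambda>_. 0)"
  shows "\<exists>z\<in>vecs N. symp_form N x z = 1 \<and> symp_form N y z = 1"
proof -
  have nonzero_coord: "\<exists>i<N. u i = 1" if "u \<in> vecs N" "u \<noteq> (\<lambda>_. 0)" for u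
    using that by (auto simp: vecs_def fun_eq_iff) (metis bit_not_zero_iff not_le)
  show ?thesis
  proof (cases "\<exists>i<N. x i = 1 \<and> y i = 1")
    case True
    then obtain i where "i < N" "x i = 1" "y i = 1"
      by blast
    then show ?thesis
      by (intro bexI[of _ "unit_vec (N - Suc i)"]) (auto simp: symp_form_unit_vec_right unit_vec_in_vecs)
  next
    case False
    obtain i j where i: "i < N" "x i = 1" and j: "j < N" "y j = 1"
      using nonzero_coord x y by blast
    with False have "y i = 0" "x j = 0"
      by auto
    with i j have "symp_form N u (\<lambda>r. unit_vec (N - Suc i) r + unit_vec (N - Suc j) r) = 1"
      if "u \<in> {x, y}" for u
      using that by (auto simp: symp_form_add_right symp_form_unit_vec_right)
    moreover have "(\<lambda>r. unit_vec (N - Suc i) r + unit_vec (N - Suc j) r) \<in> vecs N"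
      using i j by (auto simp: vecs_def unit_vec_def)
    ultimately show ?thesis
      by blast
  qed
qed

text \<open>Each step is a transvection: if \<open>\<omega>(x,z) = 1\<close> then the transvection along \<open>x + z\<close>
  maps \<open>x\<close> to \<open>z\<close>.\<close>
lemma Sp_transitive:
  assumes x: "x \<in> vecs (2*n)" "x \<noteq> (\<lambda>_. 0)" and y: "y \<in> vecs (2*n)" "y \<noteq> (\<lambda>_. 0)"
  shows "\<exists>M\<in>Sp n. mat_vec (2*n) M x = y"
proof -
  obtain z where z: "z \<in> vecs (2*n)" "symp_form (2*n) x z = 1" "symp_form (2*n) y z = 1"
    using exists_symp_form_eq_1[OF x y] by blast
  define v1 where "v1 = (\<lambda>i. x i + z i)"
  define v2 where "v2 = (\<lambda>i. z i + y i)"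
  have v: "v1 \<in> vecs (2*n)" "v2 \<in> vecs (2*n)"
    using x y z by (auto simp: vecs_def v1_def v2_def)
  have "symp_form (2*n) x v1 = 1"
    using z by (simp add: v1_def symp_form_add_right symp_form_self)
  then have x_to_z: "mat_vec (2*n) (transvection (2*n) v1) x = z"
    using x v by (simp add: mat_vec_transvection v1_def add.assoc[symmetric])
  have "symp_form (2*n) z v2 = 1"
    using z by (simp add: v2_def symp_form_add_right symp_form_self symp_form_commute[of _ z y])
  then have z_to_y: "mat_vec (2*n) (transvection (2*n) v2) z = y"
    using z v by (simp add: mat_vec_transvection v2_def add.assoc[symmetric])
  show ?thesis
    using x_to_z z_to_y v
    by (intro bexI[of _ "mat_mul (2*n) (transvection (2*n) v2) (transvection (2*n) v1)"])
      (simp_all add: mat_mul_in_Sp transvection_in_Sp mat_vec_mat_mul)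
qed

lemma bij_betw_vecs_vanishing_Pow:
  "bij_betw (\<lambda>x. {i. x i = 1}) {x\<in>vecs N. \<forall>i<m. x i = 0} (Pow {m..<N})"
proof (rule bij_betw_byWitness[where f'="\<lambda>S i. if i \<in> S then 1 else 0"])
  show "(\<lambda>x. {i. x i = 1}) ` {x\<in>vecs N. \<forall>i<m. x i = 0} \<subseteq> Pow {m..<N}"
    by (auto simp: vecs_def) (metis not_le zero_neq_one)+
qed (auto simp: fun_eq_iff vecs_def)

lemma card_vecs_vanishing: "card {x\<in>vecs N. \<forall>i<m. x i = 0} = 2 ^ (N - m)"
  using bij_betw_same_card[OF bij_betw_vecs_vanishing_Pow] by (simp add: card_Pow)

lemma finite_vecs: "finite (vecs N)"
  using bij_betw_finite[OF bij_betw_vecs_vanishing_Pow[of N 0]] by simp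

lemma card_vecs: "card (vecs N) = 2 ^ N"
  using card_vecs_vanishing[of N 0] by simp

lemma card_Sp_fibre_le:
  assumes "x \<in> vecs (2*n)" "x \<noteq> (\<lambda>_. 0)" "y \<in> vecs (2*n)" "y \<noteq> (\<lambda>_. 0)"
  shows "card {C\<in>Sp n. mat_vec (2*n) C w = x} \<le> card {C\<in>Sp n. mat_vec (2*n) C w = y}"
proof -
  obtain M where M: "M \<in> Sp n" "mat_vec (2*n) M x = y"
    using Sp_transitive assms by blast
  show ?thesis
  proof (rule card_inj_on_le[where f="mat_mul (2*n) M"])
    show "inj_on (mat_mul (2*n) M) {C\<in>Sp n. mat_vec (2*n) C w = x}"
      by (rule inj_on_subset[OF inj_on_mat_mul_Sp[OF M(1)]]) (auto simp: Sp_iff_preserves_symp_form)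
    show "mat_mul (2*n) M ` {C\<in>Sp n. mat_vec (2*n) C w = x} \<subseteq> {C\<in>Sp n. mat_vec (2*n) C w = y}"
      using M by (auto simp: mat_mul_in_Sp mat_vec_mat_mul)
  qed (simp add: finite_Sp)
qed

lemma card_Sp_mat_vec_mem:
  assumes w: "w \<in> vecs (2*n)" "w \<noteq> (\<lambda>_. 0)" and X: "X \<subseteq> vecs (2*n) - {\<lambda>_. 0}"
  shows "card {C\<in>Sp n. mat_vec (2*n) C w \<in> X} = card X * card {C\<in>Sp n. mat_vec (2*n) C w = w}"
proof -
  have fibre: "card {C\<in>Sp n. mat_vec (2*n) C w = x} = card {C\<in>Sp n. mat_vec (2*n) C w = w}"
    if "x \<in> X" for x
    using that X w by (intro antisym card_Sp_fibre_le) auto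
  have "finite X"
    using X finite_vecs finite_subset by blast
  have "{C\<in>Sp n. mat_vec (2*n) C w \<in> X} = (\<Union>x\<in>X. {C\<in>Sp n. mat_vec (2*n) C w = x})"
    by auto
  then have "card {C\<in>Sp n. mat_vec (2*n) C w \<in> X} = (\<Sum>x\<in>X. card {C\<in>Sp n. mat_vec (2*n) C w = x})"
    by (simp only:) (rule card_UN_disjoint, use \<open>finite X\<close> finite_Sp in auto)
  also have "\<dots> = card X * card {C\<in>Sp n. mat_vec (2*n) C w = w}"
    by (simp add: fibre)
  finally show ?thesis .
qed

lemma card_Sp_vanishing_le:
  assumes w: "w \<in> vecs (2*n)" "w \<noteq> (\<lambda>_. 0)" and m: "m \<le> 2*n"
  shows "card {C\<in>Sp n. \<forall>i<m. mat_vec (2*n) C w i = 0} * 2^m \<le> card (Sp n)"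
proof -
  define V where "V k = {x\<in>vecs (2*n). \<forall>i<k. x i = 0} - {\<lambda>_. 0}" for k
  define c where "c = card {C\<in>Sp n. mat_vec (2*n) C w = w}"
  have card_V: "card (V k) = 2^(2*n - k) - 1" for k
  proof -
    have "finite {x\<in>vecs (2*n). \<forall>i<k. x i = 0}" "(\<lambda>_. 0) \<in> {x\<in>vecs (2*n). \<forall>i<k. x i = 0}"
      using finite_vecs by (auto simp: vecs_def)
    then show ?thesis
      by (simp add: V_def card_vecs_vanishing)
  qed
  have image_nonzero: "mat_vec (2*n) C w \<noteq> (\<lambda>_. 0)" if "C \<in> Sp n" for C
    using Sp_mat_vec_eq_zero[OF that w(1)] w(2) by blast
  have vanishing_eq: "{C\<in>Sp n. \<forall>i<k. mat_vec (2*n) C w i = 0} = {C\<in>Sp n. mat_vec (2*n) C w \<in> V k}" for k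
    using image_nonzero mat_vec_in_vecs by (auto simp: V_def)
  have card_vanishing: "card {C\<in>Sp n. \<forall>i<k. mat_vec (2*n) C w i = 0} = (2^(2*n - k) - 1) * c" for k
  proof -
    have "V k \<subseteq> vecs (2*n) - {\<lambda>_. 0}"
      by (auto simp: V_def)
    from card_Sp_mat_vec_mem[OF w this] show ?thesis
      by (simp only: vanishing_eq card_V c_def)
  qed
  from card_vanishing[of 0] have card_Sp: "card (Sp n) = (2^(2*n) - 1) * c"
    by simp
  have "(2^(2*n - m) - 1) * 2^m = 2^(2*n) - (2::nat)^m"
    using m by (simp add: diff_mult_distrib power_add[symmetric])
  also have "\<dots> \<le> 2^(2*n) - 1"
    by (simp add: diff_le_mono2)
  finally show ?thesis
    unfolding card_vanishing card_Sp by (metis mult.assoc mult.commute mult_le_mono1)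
qed

section \<open>Converse bound\<close>

lemma measure_pmf_le_image:
  assumes inj: "inj_on \<phi> A" and le: "\<And>x. x \<in> A \<Longrightarrow> pmf p x \<le> pmf p (\<phi> x)"
  shows "measure_pmf.prob p A \<le> measure_pmf.prob p (\<phi> ` A)"
proof -
  have "measure_pmf.prob p A = infsetsum (pmf p) A"
    by (simp add: measure_pmf_conv_infsetsum)
  also have "\<dots> \<le> infsetsum (\<lambda>x. pmf p (\<phi> x)) A"
  proof (rule infsetsum_mono)
    show "Infinite_Set_Sum.abs_summable_on (\<lambda>x. pmf p (\<phi> x)) A"
      using abs_summable_on_reindex_iff[OF inj, of "pmf p"] pmf_abs_summable by (simp add: comp_def)
  qed (use le in auto)
  also have "\<dots> = infsetsum (pmf p) (\<phi> ` A)"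
    by (rule infsetsum_reindex[OF inj, symmetric])
  also have "\<dots> = measure_pmf.prob p (\<phi> ` A)"
    by (simp add: measure_pmf_conv_infsetsum)
  finally show ?thesis .
qed

lemma inj_on_card_Collect_le:
  fixes S :: "nat set"
  assumes "finite S"
  shows "inj_on (\<lambda>j. card {i\<in>S. i \<le> j}) S"
proof (rule strict_mono_on_imp_inj_on)
  show "strict_mono_on S (\<lambda>j. card {i\<in>S. i \<le> j})"
  proof (rule strict_mono_onI)
    fix j j' assume "j \<in> S" "j' \<in> S" "j < j'"
    then have "{i\<in>S. i \<le> j} \<subseteq> {i\<in>S. i \<le> j'}" "j' \<in> {i\<in>S. i \<le> j'} - {i\<in>S. i \<le> j}"
      by auto
    then have "{i\<in>S. i \<le> j} \<subset> {i\<in>S. i \<le> j'}"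
      by blast
    then show "card {i\<in>S. i \<le> j} < card {i\<in>S. i \<le> j'}"
      using assms by (simp add: psubset_card_mono)
  qed
qed

lemma card_Collect_le_bounds:
  assumes "finite S" "0 \<notin> S" "j \<in> S"
  shows "card {i\<in>S. i \<le> j} \<in> {1..min j (card S)}"
proof -
  have "{i\<in>S. i \<le> j} \<noteq> {}"
    using assms(3) by blast
  then have "1 \<le> card {i\<in>S. i \<le> j}"
    using assms(1) by (simp add: Suc_le_eq card_gt_0_iff)
  moreover have "card {i\<in>S. i \<le> j} \<le> card {1..j}"
    using assms(2) by (intro card_mono) (auto simp: Suc_le_eq intro!: gr0I)
  moreover have "card {i\<in>S. i \<le> j} \<le> card S"
    using assms(1) by (intro card_mono) auto
  ultimately show ?thesis
    by simp
qed

lemma card_comp_eq_inj_le: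
  assumes "inj_on h A" "f ` A \<subseteq> B" "finite B"
  shows "card {x\<in>A. g (f x) = h x} \<le> card B"
proof (rule card_inj_on_le[OF _ _ assms(3)])
  show "inj_on f {x\<in>A. g (f x) = h x}"
    using assms(1) by (auto simp: inj_on_def)
qed (use assms(2) in auto)

lemma syndrome_in_vecs: "syndrome n m C u \<in> vecs m"
  by (simp add: syndrome_def vecs_def)

lemma ranking_bij_betw: "is_ranking p n \<sigma> \<Longrightarrow> bij_betw (\<sigma> v) {1..2^(2*n)} (vecs (2*n))"
  by (simp add: is_ranking_def)

lemma ranking_pmf_antimono:
  "is_ranking p n \<sigma> \<Longrightarrow> 1 \<le> j \<Longrightarrow> j \<le> j' \<Longrightarrow> j' \<le> 2^(2*n) \<Longrightarrow> pmf p (\<sigma> v j', v) \<le> pmf p (\<sigma> v j, v)"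
  by (simp add: is_ranking_def)

lemma rank_sigma:
  assumes "is_ranking p n \<sigma>" "j \<in> {1..2^(2*n)}"
  shows "rank n \<sigma> (\<sigma> v j, v) = j"
  unfolding rank_def
  by (rule the_equality) (use assms(2) ranking_bij_betw[OF assms(1), of v] in \<open>auto simp: bij_betw_def inj_on_def\<close>)

lemma rank_mem_sigma_rank:
  assumes R: "is_ranking p n \<sigma>" and u: "u \<in> vecs (2*n)"
  shows "rank n \<sigma> (u, v) \<in> {1..2^(2*n)}" and "\<sigma> v (rank n \<sigma> (u, v)) = u"
proof -
  have "u \<in> \<sigma> v ` {1..2^(2*n)}"
    using ranking_bij_betw[OF R, of v] u by (simp add: bij_betw_def)
  then obtain j where "j \<in> {1..2^(2*n)}" "\<sigma> v j = u"
    by blast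
  then show "rank n \<sigma> (u, v) \<in> {1..2^(2*n)}" and "\<sigma> v (rank n \<sigma> (u, v)) = u"
    using rank_sigma[OF R] by auto
qed

lemma card_decoded_ranks_le:
  assumes "is_ranking p n \<sigma>"
  shows "card {j\<in>{1..2^(2*n)}. D v (syndrome n m C (\<sigma> v j)) = \<sigma> v j} \<le> 2^m"
proof -
  have "inj_on (\<sigma> v) {1..2^(2*n)}"
    using ranking_bij_betw[OF assms] by (simp add: bij_betw_def)
  from card_comp_eq_inj_le[OF this, of "\<lambda>j. syndrome n m C (\<sigma> v j)" "vecs m" "D v"]
  show ?thesis
    by (simp add: syndrome_in_vecs finite_vecs card_vecs image_subset_iff)
qed

text \<open>Within each fibre \<open>V = v\<close>, move the \<open>i\<close>-th vector of \<open>E\<close> (in rank order) to rank \<open>i\<close>.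
  This is injective, does not decrease the probability, and lands in \<open>J \<le> K\<close>.\<close>
lemma prob_le_prob_rank_le:
  assumes R: "is_ranking p n \<sigma>" and E: "\<And>v. card {j\<in>{1..2^(2*n)}. (\<sigma> v j, v) \<in> E} \<le> K"
  shows "measure_pmf.prob p {(u, v) \<in> E. u \<in> vecs (2*n)} \<le> measure_pmf.prob p {uv. rank n \<sigma> uv \<le> K}"
proof -
  define S where "S v = {j\<in>{1..2^(2*n)}. (\<sigma> v j, v) \<in> E}" for v
  define pos where "pos v j = card {i\<in>S v. i \<le> j}" for v j
  define A where "A = {(u, v) \<in> E. u \<in> vecs (2*n)}"
  define \<phi> where "\<phi> = (\<lambda>(u, v). (\<sigma> v (pos v (rank n \<sigma> (u, v))), v))"
  have S: "finite (S v)" "0 \<notin> S v" for v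
    by (auto simp: S_def)
  have rank_S: "rank n \<sigma> (u, v) \<in> S v" and sigma_rank: "\<sigma> v (rank n \<sigma> (u, v)) = u"
    if "(u, v) \<in> A" for u v
    using that rank_mem_sigma_rank[OF R] by (auto simp: A_def S_def)
  have pos: "pos v (rank n \<sigma> (u, v)) \<in> {1..min (rank n \<sigma> (u, v)) K}" if "(u, v) \<in> A" for u v
    using card_Collect_le_bounds[OF S rank_S[OF that]] E[of v] by (auto simp: pos_def S_def)
  have pos_range: "pos v (rank n \<sigma> (u, v)) \<in> {1..2^(2*n)}" if "(u, v) \<in> A" for u v
    using pos[OF that] rank_S[OF that] by (auto simp: S_def)
  have "inj_on \<phi> A"
  proof (rule inj_onI, clarify)
    fix u v u' v'
    assume uv: "(u, v) \<in> A" and uv': "(u', v') \<in> A" and "\<phi> (u, v) = \<phi> (u', v')"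
    then have "v' = v" and "\<sigma> v (pos v (rank n \<sigma> (u, v))) = \<sigma> v (pos v (rank n \<sigma> (u', v)))"
      by (auto simp: \<phi>_def)
    with uv uv' have "pos v (rank n \<sigma> (u, v)) = pos v (rank n \<sigma> (u', v))"
      using ranking_bij_betw[OF R, of v] pos_range by (auto simp: bij_betw_def dest: inj_onD)
    with uv uv' \<open>v' = v\<close> have "rank n \<sigma> (u, v) = rank n \<sigma> (u', v)"
      using inj_on_card_Collect_le[OF S(1)] rank_S by (auto simp: pos_def dest: inj_onD)
    with uv uv' \<open>v' = v\<close> show "u = u' \<and> v = v'"
      using sigma_rank by metis
  qed
  moreover have "pmf p x \<le> pmf p (\<phi> x)" if "x \<in> A" for x
  proof -
    obtain u v where x: "x = (u, v)"
      by (cases x)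
    have "pmf p (\<sigma> v (rank n \<sigma> (u, v)), v) \<le> pmf p (\<sigma> v (pos v (rank n \<sigma> (u, v))), v)"
      using pos[of u v] rank_S[of u v] that by (intro ranking_pmf_antimono[OF R]) (auto simp: x S_def)
    then show ?thesis
      using sigma_rank[of u v] that by (simp add: x \<phi>_def)
  qed
  ultimately have "measure_pmf.prob p A \<le> measure_pmf.prob p (\<phi> ` A)"
    by (rule measure_pmf_le_image)
  also have "\<dots> \<le> measure_pmf.prob p {uv. rank n \<sigma> uv \<le> K}"
    using pos pos_range by (intro measure_pmf.finite_measure_mono) (auto simp: \<phi>_def rank_sigma[OF R])
  finally show ?thesis
    by (simp only: A_def)
qed

lemma prob_decoded_le_prob_rank_le:
  assumes R: "is_ranking p n \<sigma>" and supp: "\<forall>uv \<in> set_pmf p. fst uv \<in> vecs (2*n)"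
  shows "measure_pmf.prob p {(u, v). D v (syndrome n m C u) = u}
      \<le> measure_pmf.prob p {uv. rank n \<sigma> uv \<le> 2^m}"
proof -
  have "measure_pmf.prob p {(u, v). D v (syndrome n m C u) = u}
      \<le> measure_pmf.prob p {(u, v) \<in> {(u, v). D v (syndrome n m C u) = u}. u \<in> vecs (2*n)}"
    using supp by (intro measure_pmf.finite_measure_mono_AE) (auto simp: AE_measure_pmf_iff)
  also have "\<dots> \<le> measure_pmf.prob p {uv. rank n \<sigma> uv \<le> 2^m}"
    using card_decoded_ranks_le[OF R] by (intro prob_le_prob_rank_le[OF R]) simp
  finally show ?thesis .
qed

lemma eps_conv_le_err_prob:
  assumes "is_ranking p n \<sigma>" and "\<forall>uv \<in> set_pmf p. fst uv \<in> vecs (2*n)"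
  shows "eps_conv p n \<sigma> k \<le> err_prob p n (n - k) C D"
proof -
  have "eps_conv p n \<sigma> k = 1 - measure_pmf.prob p {uv. rank n \<sigma> uv \<le> 2^(n - k)}"
    using measure_pmf.prob_compl[of "{uv. rank n \<sigma> uv \<le> 2^(n - k)}" p]
    by (simp add: eps_conv_def Compl_eq_Diff_UNIV[symmetric] not_le Collect_neg_eq[symmetric])
  moreover have "err_prob p n (n - k) C D = 1 - measure_pmf.prob p {(u, v). D v (syndrome n (n - k) C u) = u}"
    using measure_pmf.prob_compl[of "{(u, v). D v (syndrome n (n - k) C u) = u}" p]
    by (simp add: err_prob_def Compl_eq_Diff_UNIV[symmetric] Collect_neg_eq[symmetric] case_prod_unfold)
  ultimately show ?thesis
    using prob_decoded_le_prob_rank_le[OF assms] by simp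
qed

section \<open>Achievability by random symplectic coding\<close>

definition least_rank_decoder ::
    "nat \<Rightarrow> nat \<Rightarrow> ('v \<Rightarrow> nat \<Rightarrow> (nat \<Rightarrow> bit)) \<Rightarrow> (nat \<Rightarrow> nat \<Rightarrow> bit) \<Rightarrow> 'v \<Rightarrow> (nat \<Rightarrow> bit) \<Rightarrow> (nat \<Rightarrow> bit)" where
  "least_rank_decoder n m \<sigma> C v s = \<sigma> v (LEAST j. 1 \<le> j \<and> j \<le> 2^(2*n) \<and> syndrome n m C (\<sigma> v j) = s)"

lemma syndrome_eq_iff:
  "syndrome n m C a = syndrome n m C b \<longleftrightarrow> (\<forall>i<m. mat_vec (2*n) C (\<lambda>i. a i + b i) i = 0)"
  by (auto simp: syndrome_def fun_eq_iff mat_vec_add bit_add_eq_0_iff)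

lemma least_rank_decoder_fails_imp_collision:
  assumes R: "is_ranking p n \<sigma>" and u: "u \<in> vecs (2*n)"
    and fails: "least_rank_decoder n m \<sigma> C v (syndrome n m C u) \<noteq> u"
  shows "\<exists>j\<in>{1..<rank n \<sigma> (u, v)}. \<forall>i<m. mat_vec (2*n) C (\<lambda>i. \<sigma> v j i + u i) i = 0"
proof -
  define r where "r = rank n \<sigma> (u, v)"
  define P where "P = (\<lambda>j. 1 \<le> j \<and> j \<le> 2^(2*n) \<and> syndrome n m C (\<sigma> v j) = syndrome n m C u)"
  define j where "j = Least P"
  have r: "r \<in> {1..2^(2*n)}" "\<sigma> v r = u"
    using rank_mem_sigma_rank[OF R u] by (auto simp: r_def)
  then have "P r"
    by (simp add: P_def)
  then have "P j" "j \<le> r"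
    unfolding j_def by (auto intro: LeastI Least_le)
  then have j: "1 \<le> j" "j \<le> r" "syndrome n m C (\<sigma> v j) = syndrome n m C u"
    by (simp_all add: P_def)
  have "least_rank_decoder n m \<sigma> C v (syndrome n m C u) = \<sigma> v j"
    by (simp add: least_rank_decoder_def P_def j_def)
  with fails r(2) have "j \<noteq> r"
    by auto
  with j show ?thesis
    unfolding r_def syndrome_eq_iff[symmetric] by auto
qed

lemma card_least_rank_decoder_fails_le:
  assumes R: "is_ranking p n \<sigma>" and u: "u \<in> vecs (2*n)" and m: "m \<le> 2*n"
  shows "card {C\<in>Sp n. least_rank_decoder n m \<sigma> C v (syndrome n m C u) \<noteq> u} * 2^m
           \<le> card (Sp n) * (rank n \<sigma> (u, v) - 1)"
proof -
  define r where "r = rank n \<sigma> (u, v)"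
  have r: "r \<in> {1..2^(2*n)}" "\<sigma> v r = u"
    using rank_mem_sigma_rank[OF R u] by (auto simp: r_def)
  define Y where "Y j = {C\<in>Sp n. \<forall>i<m. mat_vec (2*n) C (\<lambda>i. \<sigma> v j i + u i) i = 0}" for j
  have "{C\<in>Sp n. least_rank_decoder n m \<sigma> C v (syndrome n m C u) \<noteq> u} \<subseteq> (\<Union>j\<in>{1..<r}. Y j)"
    using least_rank_decoder_fails_imp_collision[OF R u] by (auto simp: Y_def r_def)
  moreover have "finite (\<Union>j\<in>{1..<r}. Y j)"
    using finite_Sp by (simp add: Y_def)
  ultimately have "card {C\<in>Sp n. least_rank_decoder n m \<sigma> C v (syndrome n m C u) \<noteq> u}
      \<le> card (\<Union>j\<in>{1..<r}. Y j)"
    by (intro card_mono)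
  also have "\<dots> \<le> (\<Sum>j\<in>{1..<r}. card (Y j))"
    by (rule card_UN_le) simp
  finally have "card {C\<in>Sp n. least_rank_decoder n m \<sigma> C v (syndrome n m C u) \<noteq> u} * 2^m
      \<le> (\<Sum>j\<in>{1..<r}. card (Y j) * 2^m)"
    unfolding sum_distrib_right[symmetric] by (rule mult_right_mono) simp_all
  also have "\<dots> \<le> (\<Sum>j\<in>{1..<r}. card (Sp n))"
  proof (rule sum_mono, unfold Y_def, rule card_Sp_vanishing_le[OF _ _ m])
    fix j assume j: "j \<in> {1..<r}"
    have "\<sigma> v j \<in> vecs (2*n)" "\<sigma> v j \<noteq> \<sigma> v r"
      using ranking_bij_betw[OF R, of v] j r(1) by (auto simp: bij_betw_def dest: inj_onD)
    then show "(\<lambda>i. \<sigma> v j i + u i) \<in> vecs (2*n)" "(\<lambda>i. \<sigma> v j i + u i) \<noteq> (\<lambda>_. 0)"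
      using u r(2) by (auto simp: vecs_def fun_eq_iff bit_add_eq_0_iff)
  qed
  finally show ?thesis
    by (simp add: r_def mult.commute)
qed

lemma exists_le_of_sum_le_card_mult:
  fixes f :: "'a \<Rightarrow> real" and c :: real
  assumes "finite I" "I \<noteq> {}" "sum f I \<le> card I * c"
  shows "\<exists>i\<in>I. f i \<le> c"
proof (rule ccontr)
  assume "\<not> (\<exists>i\<in>I. f i \<le> c)"
  then have "(\<Sum>i\<in>I. c) < sum f I"
    using assms(1,2) by (intro sum_strict_mono) auto
  with assms(3) show False
    by simp
qed

definition ach_error :: "nat \<Rightarrow> nat \<Rightarrow> real" where
  "ach_error m j = (if j \<le> 2^m then (real j - 1) / 2^m else 1)"

lemma abs_ach_error_le_1: "\<bar>ach_error m j\<bar> \<le> 1"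
proof (cases "j \<le> 2^m")
  case True
  then have "real j \<le> 2^m"
    by (metis of_nat_le_iff of_nat_numeral of_nat_power)
  then have "\<bar>real j - 1\<bar> \<le> 2^m"
    using one_le_power[of "2::real" m] unfolding abs_le_iff by linarith
  with True show ?thesis
    by (simp add: ach_error_def abs_divide)
qed (simp add: ach_error_def)

lemma card_least_rank_decoder_fails_le_ach_error:
  assumes R: "is_ranking p n \<sigma>" and u: "u \<in> vecs (2*n)" and m: "m \<le> 2*n"
  shows "real (card {C\<in>Sp n. least_rank_decoder n m \<sigma> C v (syndrome n m C u) \<noteq> u})
           \<le> real (card (Sp n)) * ach_error m (rank n \<sigma> (u, v))"
proof (cases "rank n \<sigma> (u, v) \<le> 2^m")
  case True
  have "real (card {C\<in>Sp n. least_rank_decoder n m \<sigma> C v (syndrome n m C u) \<noteq> u} * 2^m)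
      \<le> real (card (Sp n) * (rank n \<sigma> (u, v) - 1))"
    using card_least_rank_decoder_fails_le[OF R u m, of v] by (simp only: of_nat_le_iff)
  with True show ?thesis
    using rank_mem_sigma_rank(1)[OF R u, of v] by (simp add: ach_error_def of_nat_diff field_simps)
next
  case False
  have "card {C\<in>Sp n. least_rank_decoder n m \<sigma> C v (syndrome n m C u) \<noteq> u} \<le> card (Sp n)"
    using finite_Sp by (intro card_mono) auto
  with False show ?thesis
    by (simp add: ach_error_def)
qed

lemma integrable_bounded_pmf:
  fixes f :: "'a \<Rightarrow> real"
  assumes "\<And>x. \<bar>f x\<bar> \<le> B"
  shows "integrable (measure_pmf p) f"
  using assms by (intro measure_pmf.integrable_const_bound[where B=B]) auto

lemma exists_Sp_err_prob_le:
  assumes R: "is_ranking p n \<sigma>" and supp: "\<forall>uv \<in> set_pmf p. fst uv \<in> vecs (2*n)" and m: "m \<le> 2*n"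
  shows "\<exists>C\<in>Sp n. err_prob p n m C (least_rank_decoder n m \<sigma> C)
           \<le> measure_pmf.expectation p (\<lambda>uv. ach_error m (rank n \<sigma> uv))"
proof (rule exists_le_of_sum_le_card_mult[OF finite_Sp Sp_nonempty])
  define B where "B C = {(u, v). least_rank_decoder n m \<sigma> C v (syndrome n m C u) \<noteq> u}" for C
  define g where "g = (\<lambda>uv. real (card (Sp n)) * ach_error m (rank n \<sigma> uv))"
  have int_B: "integrable (measure_pmf p) (indicator (B C) :: _ \<Rightarrow> real)" for C
    by (rule integrable_bounded_pmf[where B=1]) (simp add: indicator_def)
  have int_g: "integrable (measure_pmf p) g"
    unfolding g_def by (intro integrable_mult_right integrable_bounded_pmf[where B=1] abs_ach_error_le_1)
  have "(\<Sum>C\<in>Sp n. indicator (B C) x) \<le> g x" if "x \<in> set_pmf p" for x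
  proof -
    obtain u v where x: "x = (u, v)"
      by (cases x)
    with supp that have u: "u \<in> vecs (2*n)"
      by auto
    have "(\<Sum>C\<in>Sp n. indicator (B C) x) = (\<Sum>C\<in>Sp n. of_bool (x \<in> B C) :: real)"
      by (simp add: indicator_def)
    also have "\<dots> = real (card {C\<in>Sp n. x \<in> B C})"
      using finite_Sp by (simp add: Int_def)
    also have "\<dots> \<le> g x"
      using card_least_rank_decoder_fails_le_ach_error[OF R u m, of v] by (simp add: x B_def g_def)
    finally show ?thesis .
  qed
  then have "measure_pmf.expectation p (\<lambda>x. \<Sum>C\<in>Sp n. indicator (B C) x) \<le> measure_pmf.expectation p g"
    using int_B int_g by (intro integral_mono_AE Bochner_Integration.integrable_sum AE_pmfI)
  moreover have "(\<Sum>C\<in>Sp n. err_prob p n m C (least_rank_decoder n m \<sigma> C))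
      = measure_pmf.expectation p (\<lambda>x. \<Sum>C\<in>Sp n. indicator (B C) x)"
    using int_B by (simp add: err_prob_def B_def Bochner_Integration.integral_sum)
  ultimately show "(\<Sum>C\<in>Sp n. err_prob p n m C (least_rank_decoder n m \<sigma> C))
      \<le> real (card (Sp n)) * measure_pmf.expectation p (\<lambda>uv. ach_error m (rank n \<sigma> uv))"
    by (simp add: g_def)
qed

lemma eps_ach_eq_expectation:
  "eps_ach p n \<sigma> k = measure_pmf.expectation p (\<lambda>uv. ach_error (n - k) (rank n \<sigma> uv))"
proof -
  let ?I = "{uv. rank n \<sigma> uv > 2^(n - k)}"
  let ?h = "\<lambda>uv. (if rank n \<sigma> uv \<le> 2^(n - k) then 1 else 0) * (real (rank n \<sigma> uv) - 1) / 2^(n - k)"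
  have "\<bar>?h x\<bar> \<le> 1" for x
    using abs_ach_error_le_1[of "n - k" "rank n \<sigma> x"] by (simp add: ach_error_def split: if_splits)
  then have "integrable (measure_pmf p) ?h"
    by (rule integrable_bounded_pmf)
  moreover have "integrable (measure_pmf p) (indicator ?I :: _ \<Rightarrow> real)"
    by (rule integrable_bounded_pmf[where B=1]) (simp add: indicator_def)
  ultimately have "eps_ach p n \<sigma> k = measure_pmf.expectation p (\<lambda>uv. indicator ?I uv + ?h uv)"
    by (simp add: eps_ach_def)
  also have "\<dots> = measure_pmf.expectation p (\<lambda>uv. ach_error (n - k) (rank n \<sigma> uv))"
    by (intro Bochner_Integration.integral_cong) (auto simp: indicator_def ach_error_def)
  finally show ?thesis .
qed

section \<open>Error probabilities and rates\<close>

lemma eps_conv_mono: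
  assumes "k' \<le> k"
  shows "eps_conv p n \<sigma> k' \<le> eps_conv p n \<sigma> k"
proof -
  have "(2::nat)^(n - k) \<le> 2^(n - k')"
    using assms by (intro power_increasing) auto
  then have "{uv. 2^(n - k') < rank n \<sigma> uv} \<subseteq> {uv. 2^(n - k) < rank n \<sigma> uv}"
    using le_less_trans by blast
  then show ?thesis
    unfolding eps_conv_def by (rule measure_pmf.finite_measure_mono) simp
qed

lemma eps_conv_le_eps_guess:
  assumes "is_ranking p n \<sigma>" and "\<forall>uv \<in> set_pmf p. fst uv \<in> vecs (2*n)"
  shows "eps_conv p n \<sigma> k \<le> eps_guess p n k"
  unfolding eps_guess_def
proof (rule cInf_greatest)
  show "{err_prob p n (n - k) C D | C D. C \<in> Sp n} \<noteq> {}"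
    using Sp_nonempty by blast
qed (use eps_conv_le_err_prob[OF assms] in blast)

lemma exists_err_prob_le_eps_ach:
  assumes "is_ranking p n \<sigma>" and "\<forall>uv \<in> set_pmf p. fst uv \<in> vecs (2*n)"
  shows "\<exists>C\<in>Sp n. \<exists>D. err_prob p n (n - k) C D \<le> eps_ach p n \<sigma> k"
proof -
  have "n - k \<le> 2*n"
    by simp
  from exists_Sp_err_prob_le[OF assms this] show ?thesis
    by (auto simp: eps_ach_eq_expectation)
qed

lemma eps_guess_le_eps_ach:
  assumes "is_ranking p n \<sigma>" and "\<forall>uv \<in> set_pmf p. fst uv \<in> vecs (2*n)"
  shows "eps_guess p n k \<le> eps_ach p n \<sigma> k"
proof -
  obtain C D where C: "C \<in> Sp n" and D: "err_prob p n (n - k) C D \<le> eps_ach p n \<sigma> k"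
    using exists_err_prob_le_eps_ach[OF assms] by blast
  have "bdd_below {err_prob p n (n - k) C D | C D. C \<in> Sp n}"
    by (rule bdd_belowI[where m=0]) (auto simp: err_prob_def)
  with C have "eps_guess p n k \<le> err_prob p n (n - k) C D"
    unfolding eps_guess_def by (intro cInf_lower) auto
  with D show ?thesis
    by linarith
qed

lemma R_ach_le_R_guess:
  assumes "is_ranking p n \<sigma>" and "\<forall>uv \<in> set_pmf p. fst uv \<in> vecs (2*n)"
  shows "R_ach p n \<sigma> \<epsilon> \<le> R_guess p n \<epsilon>"
  unfolding R_ach_def R_guess_def
proof (intro Sup_subset_mono subsetI)
  fix x
  assume "x \<in> {ereal (real k / real n) | k. k \<le> n \<and> eps_ach p n \<sigma> k \<le> \<epsilon>}"
  then obtain k where k: "x = ereal (real k / real n)" "k \<le> n" "eps_ach p n \<sigma> k \<le> \<epsilon>"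
    by blast
  obtain C D where C: "C \<in> Sp n" and D: "err_prob p n (n - k) C D \<le> eps_ach p n \<sigma> k"
    using exists_err_prob_le_eps_ach[OF assms] by blast
  from D k(3) have "err_prob p n (n - k) C D \<le> \<epsilon>"
    by linarith
  with k C show "x \<in> {ereal (real k / real n) | k.
      k \<le> n \<and> (\<exists>C D. C \<in> Sp n \<and> err_prob p n (n - k) C D \<le> \<epsilon>)}"
    by blast
qed

lemma Sup_ereal_image_less_Inf:
  fixes A B :: "real set"
  assumes "finite A" "finite B" "\<And>a b. a \<in> A \<Longrightarrow> b \<in> B \<Longrightarrow> a < b"
  shows "Sup (ereal ` A) < Inf (ereal ` B)"
proof -
  have "Sup (ereal ` A) \<in> insert (-\<infinity>) (ereal ` A)"
    using Max_Sup[of "ereal ` A"] Max_in[of "ereal ` A"] assms(1)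
    by (cases "A = {}") (auto simp: bot_ereal_def)
  moreover have "Inf (ereal ` B) \<in> insert \<infinity> (ereal ` B)"
    using Min_Inf[of "ereal ` B"] Min_in[of "ereal ` B"] assms(2)
    by (cases "B = {}") (auto simp: top_ereal_def)
  ultimately show ?thesis
    using assms(3) by auto
qed

lemma Sup_rates_less_Inf_rates:
  assumes "0 < n" and "\<And>k k'. k \<le> n \<Longrightarrow> k' \<le> n \<Longrightarrow> P k \<Longrightarrow> Q k' \<Longrightarrow> k < k'"
  shows "Sup {ereal (real k / real n) | k. k \<le> n \<and> P k} < Inf {ereal (real k / real n) | k. k \<le> n \<and> Q k}"
proof -
  have rates: "{ereal (real k / real n) | k. k \<le> n \<and> R k}
      = ereal ` ((\<lambda>k. real k / real n) ` {k. k \<le> n \<and> R k})" for R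
    by auto
  show ?thesis
    unfolding rates using assms by (intro Sup_ereal_image_less_Inf) (auto simp: divide_strict_right_mono)
qed

lemma R_guess_less_R_conv:
  assumes "1 \<le> n" "is_ranking p n \<sigma>" and "\<forall>uv \<in> set_pmf p. fst uv \<in> vecs (2*n)"
  shows "R_guess p n \<epsilon> < R_conv p n \<sigma> \<epsilon>"
  unfolding R_guess_def R_conv_def
proof (rule Sup_rates_less_Inf_rates)
  fix k k'
  assume "\<exists>C D. C \<in> Sp n \<and> err_prob p n (n - k) C D \<le> \<epsilon>" and "\<epsilon> < eps_conv p n \<sigma> k'"
  then have "eps_conv p n \<sigma> k' > eps_conv p n \<sigma> k"
    using eps_conv_le_err_prob[OF assms(2,3), of k] by (meson le_less_trans order.trans)
  then show "k < k'"
    using eps_conv_mono by (meson not_le)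
qed (use assms(1) in simp)

theorem theorem7:
  fixes p :: "((nat \<Rightarrow> bit) \<times> 'v) pmf" and n :: nat and \<sigma> :: "'v \<Rightarrow> nat \<Rightarrow> (nat \<Rightarrow> bit)"
    and \<epsilon> :: real
  assumes "1 \<le> n"
    and "\<forall>uv \<in> set_pmf p. fst uv \<in> vecs (2*n)"
    and "is_ranking p n \<sigma>"
    and "0 < \<epsilon>"
  shows "(\<forall>k\<le>n. eps_conv p n \<sigma> k \<le> eps_guess p n k \<and> eps_guess p n k \<le> eps_ach p n \<sigma> k)
       \<and> R_ach p n \<sigma> \<epsilon> \<le> R_guess p n \<epsilon> \<and> R_guess p n \<epsilon> < R_conv p n \<sigma> \<epsilon>"
proof -
  show ?thesis
    using eps_conv_le_eps_guess[OF assms(3,2)] eps_guess_le_eps_ach[OF assms(3,2)]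
      R_ach_le_R_guess[OF assms(3,2)] R_guess_less_R_conv[OF assms(1,3,2)]
    by blast
qed

end
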